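(* Let $S,T$ be finite sets, $E\subseteq S\times T$, and for $y\in\mathbb{R}^S_+$ and $x\in\mathbb{R}^E_{+}$ define \[ \mathcal I(y;x)=\sum_{t\in T}\Big(1-\prod_{(s,t)\in E} x_{st}^{\,y(s)}\Big). \] Then for each fixed $y\ge 0$, the function $x\mapsto \mathcal I(y;x)$ is continuous submodular on the nonnegative orthant $\mathbb{R}^E_+$.
   Context: A function $g$ on a subset of $\mathbb{R}^m$ is continuous submodular if $g(x)+g(x')\ge g(x\vee x')+g(x\wedge x')$ for all $x,x'$ in its domain, where $\vee,\wedge$ are coordinatewise maximum and minimum. *)

theory Defs
  imports Complex_Main
begin

text \<open>Real power with the convention 0^0 = 1 (Isabelle's powr has 0 powr 0 = 0).\<close>
definition nnpow :: "real \<Rightarrow> real \<Rightarrow> real" where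
  "nnpow b a = (if a = 0 then 1 else b powr a)"

definition nonneg_orthant :: "'e set \<Rightarrow> ('e \<Rightarrow> real) set" where
  "nonneg_orthant E = {x. (\<forall>e\<in>E. 0 \<le> x e) \<and> (\<forall>e. e \<notin> E \<longrightarrow> x e = 0)}"

definition continuous_submodular :: "('e \<Rightarrow> real) set \<Rightarrow> (('e \<Rightarrow> real) \<Rightarrow> real) \<Rightarrow> bool" where
  "continuous_submodular D g \<longleftrightarrow>
     (\<forall>x\<in>D. \<forall>x'\<in>D. g x + g x' \<ge> g (\<lambda>e. max (x e) (x' e)) + g (\<lambda>e. min (x e) (x' e)))"

definition influence :: "'b set \<Rightarrow> ('a \<times> 'b) set \<Rightarrow> ('a \<Rightarrow> real) \<Rightarrow> ('a \<times> 'b \<Rightarrow> real) \<Rightarrow> real" where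
  "influence T E y x = (\<Sum>t\<in>T. 1 - (\<Prod>e\<in>{e\<in>E. snd e = t}. nnpow (x e) (y (fst e))))"

end

theory Submission
  imports Defs
begin

(* Each summand of the influence is 1 - prod_e x_e^(y s), so it suffices that the product is
   supermodular on the nonnegative orthant. Since u |-> u^c is monotone for c >= 0, it commutes with
   coordinatewise max and min, which reduces the claim to supermodularity of a product of nonnegative
   factors, prod a + prod b <= prod (max a b) + prod (min a b); this follows by induction on the
   index set. *)

lemma max_min_mult_supermodular:
  fixes a b P Q M m :: "'a::linordered_idom"
  assumes "0 \<le> a" "0 \<le> b"
    and "P + Q \<le> M + m" "P \<le> M" "Q \<le> M" "m \<le> P" "m \<le> Q"
  shows "a * P + b * Q \<le> max a b * M + min a b * m"
proof (cases "b \<le> a")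
  case True
  have "b * (M - P) \<le> a * (M - P)"
    using True assms by (intro mult_right_mono) auto
  moreover have "0 \<le> b * (M - P) + b * (m - Q)"
    using assms by (simp add: distrib_left[symmetric])
  ultimately have "0 \<le> a * (M - P) + b * (m - Q)"
    by linarith
  then show ?thesis
    using True by (simp add: algebra_simps)
next
  case False
  have "a * (M - Q) \<le> b * (M - Q)"
    using False assms by (intro mult_right_mono) auto
  moreover have "0 \<le> a * (M - Q) + a * (m - P)"
    using assms by (simp add: distrib_left[symmetric])
  ultimately have "0 \<le> b * (M - Q) + a * (m - P)"
    by linarith
  then show ?thesis
    using False by (simp add: algebra_simps)
qed

lemma prod_max_min_supermodular:
  fixes a b :: "'i \<Rightarrow> 'a::linordered_idom"
  assumes "finite A" and "\<And>i. i \<in> A \<Longrightarrow> 0 \<le> a i \<and> 0 \<le> b i"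
  shows "prod a A + prod b A \<le> (\<Prod>i\<in>A. max (a i) (b i)) + (\<Prod>i\<in>A. min (a i) (b i))"
  using assms
proof (induction A rule: finite_induct)
  case empty
  then show ?case by simp
next
  case (insert j F)
  have nonneg: "\<And>i. i \<in> F \<Longrightarrow> 0 \<le> a i \<and> 0 \<le> b i"
    using insert.prems by blast
  have "a j * prod a F + b j * prod b F
      \<le> max (a j) (b j) * (\<Prod>i\<in>F. max (a i) (b i)) + min (a j) (b j) * (\<Prod>i\<in>F. min (a i) (b i))"
  proof (rule max_min_mult_supermodular)
    show "prod a F + prod b F \<le> (\<Prod>i\<in>F. max (a i) (b i)) + (\<Prod>i\<in>F. min (a i) (b i))"
      using insert.IH nonneg .
    show "prod a F \<le> (\<Prod>i\<in>F. max (a i) (b i))" "prod b F \<le> (\<Prod>i\<in>F. max (a i) (b i))"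
      "(\<Prod>i\<in>F. min (a i) (b i)) \<le> prod a F" "(\<Prod>i\<in>F. min (a i) (b i)) \<le> prod b F"
      using nonneg by (auto intro!: prod_mono)
  qed (use insert.prems in auto)
  then show ?case
    using insert.hyps by simp
qed

lemma nnpow_mono: "0 \<le> u \<Longrightarrow> u \<le> v \<Longrightarrow> nnpow u c \<le> nnpow v c" if "0 \<le> c"
  using that unfolding nnpow_def by (auto intro: powr_mono2)

lemma nnpow_nonneg: "0 \<le> nnpow u c"
  unfolding nnpow_def by simp

lemma nnpow_max: "nnpow (max u v) c = max (nnpow u c) (nnpow v c)"
  if "0 \<le> c" "0 \<le> u" "0 \<le> v"
  using nnpow_mono[of c u v] nnpow_mono[of c v u] that by (cases "u \<le> v") (simp_all add: max_def)

lemma nnpow_min: "nnpow (min u v) c = min (nnpow u c) (nnpow v c)"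
  if "0 \<le> c" "0 \<le> u" "0 \<le> v"
  using nnpow_mono[of c u v] nnpow_mono[of c v u] that by (cases "u \<le> v") (simp_all add: min_def)

lemma prod_nnpow_supermodular:
  fixes x x' :: "'e \<Rightarrow> real" and c :: "'e \<Rightarrow> real"
  assumes "finite A" and "\<And>e. e \<in> A \<Longrightarrow> 0 \<le> c e \<and> 0 \<le> x e \<and> 0 \<le> x' e"
  shows "(\<Prod>e\<in>A. nnpow (x e) (c e)) + (\<Prod>e\<in>A. nnpow (x' e) (c e))
    \<le> (\<Prod>e\<in>A. nnpow (max (x e) (x' e)) (c e)) + (\<Prod>e\<in>A. nnpow (min (x e) (x' e)) (c e))"
proof -
  have "(\<Prod>e\<in>A. nnpow (max (x e) (x' e)) (c e)) = (\<Prod>e\<in>A. max (nnpow (x e) (c e)) (nnpow (x' e) (c e)))"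
    "(\<Prod>e\<in>A. nnpow (min (x e) (x' e)) (c e)) = (\<Prod>e\<in>A. min (nnpow (x e) (c e)) (nnpow (x' e) (c e)))"
    using assms(2) by (auto intro!: prod.cong simp: nnpow_max nnpow_min)
  then show ?thesis
    using prod_max_min_supermodular[OF assms(1), of "\<lambda>e. nnpow (x e) (c e)" "\<lambda>e. nnpow (x' e) (c e)"]
    by (simp add: nnpow_nonneg)
qed

theorem corollary1:
  fixes S :: "'a set" and T :: "'b set" and E :: "('a \<times> 'b) set" and y :: "'a \<Rightarrow> real"
  assumes "finite S" and "finite T" and "E \<subseteq> S \<times> T"
    and "\<forall>s\<in>S. 0 \<le> y s"
  shows "continuous_submodular (nonneg_orthant E) (influence T E y)"
  unfolding continuous_submodular_def
proof (intro ballI)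
  fix x x' assume "x \<in> nonneg_orthant E" and "x' \<in> nonneg_orthant E"
  then have nonneg: "\<And>e. e \<in> E \<Longrightarrow> 0 \<le> y (fst e) \<and> 0 \<le> x e \<and> 0 \<le> x' e"
    using assms(3,4) unfolding nonneg_orthant_def by auto
  have "finite E"
    using assms(1-3) by (meson finite_SigmaI finite_subset)
  then have factor_supermodular: "(\<Prod>e\<in>{e\<in>E. snd e = t}. nnpow (x e) (y (fst e))) + (\<Prod>e\<in>{e\<in>E. snd e = t}. nnpow (x' e) (y (fst e)))
      \<le> (\<Prod>e\<in>{e\<in>E. snd e = t}. nnpow (max (x e) (x' e)) (y (fst e)))
        + (\<Prod>e\<in>{e\<in>E. snd e = t}. nnpow (min (x e) (x' e)) (y (fst e)))" for t
    using nonneg by (intro prod_nnpow_supermodular) auto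
  show "influence T E y (\<lambda>e. max (x e) (x' e)) + influence T E y (\<lambda>e. min (x e) (x' e))
        \<le> influence T E y x + influence T E y x'"
    unfolding influence_def sum.distrib[symmetric] by (intro sum_mono) (smt (verit) factor_supermodular)
qed

end
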